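(* Let $(A,B)$ be a nondegenerate pair of integral ternary quadratic forms and $\delta=(\delta_1,\delta_2)\in M_3(\mathbb{Z})\times M_2(\mathbb{Z})$ with $\det\delta_1\ne0$, $\det\delta_2\ne0$. Put $(A',B')=\delta\cdot(A,B)$ and let $\{1,\beta_1,\beta_2,\beta_3\}$ denote the standard basis of $Q(A',B')$ and $\{1,\alpha_1,\alpha_2,\alpha_3\}$ that of $Q(A,B)$. Then there exists an injective ring homomorphism $\psi:Q(A',B')\to Q(A,B)$ with \[ {}^t(\psi(\beta_1),\psi(\beta_2),\psi(\beta_3))\equiv (\det\delta_1)(\det\delta_2)\,\delta_1\,{}^t(\alpha_1,\alpha_2,\alpha_3)\pmod{\mathbb{Z}}. \]
   Context: For a pair $(A,B)$ of integral ternary quadratic forms $A(v)=\sum_{i\le j}a_{ij}v_iv_j$, $B(v)=\sum_{i\le j}b_{ij}v_iv_j$ (with $a_{ji}=a_{ij}$, $b_{ji}=b_{ij}$), put $\lambda^{ij}_{k\ell}=a_{ij}b_{k\ell}-b_{ij}a_{k\ell}$. For a permutation $(i,j,k)$ of $(1,2,3)$ with sign $\pm$, set $c_{ii}^i=\pm\lambda^{ik}_{ij}+C_i$, $c_{ii}^j=\pm\lambda^{ii}_{ik}$, $c_{ij}^i=\pm\tfrac12\lambda^{ik}_{jj}+\tfrac12C_j$, $c_{ij}^k=\pm\lambda^{jj}_{ii}$, where $C_1=\lambda^{23}_{11}$, $C_2=-\lambda^{13}_{22}$, $C_3=\lambda^{12}_{33}$, and $c_{ij}^0=\sum_{r=1}^3(c_{jk}^rc_{ri}^k-c_{ij}^rc_{rk}^k)$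 for any $k\ne i$. The quartic ring $Q(A,B)$ is the free $\mathbb{Z}$-module with basis $\{1,\alpha_1,\alpha_2,\alpha_3\}$ and multiplication $\alpha_i\alpha_j=\sum_{k=0}^3c_{ij}^k\alpha_k$ ($\alpha_0=1$). $(A,B)$ is nondegenerate if the discriminant of the binary cubic form $4\det(u_1A-u_2B)$ is nonzero (identifying forms with half-integral symmetric matrices). The action of $\delta=(\delta_1,\delta_2)$, $\delta_2=\begin{pmatrix}p&q\\ r&s\end{pmatrix}$, is $\delta\cdot(A,B)=(p(\delta_1A)+q(\delta_1B),\,r(\delta_1A)+s(\delta_1B))$ with $(\delta_1A)(v)=A(v\delta_1)$. *)

theory Defs
  imports Complex_Main "HOL-Algebra.Ring"
begin

text \<open>A ternary quadratic form
  A(v) = sum_{i<=j} a_ij v_i v_j is represented by its coefficient function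
  a :: nat => nat => int, of which only the entries a i j with 1 <= i <= j <= 3
  are used; a_ji = a_ij is realised by symc. Matrices are nat => nat => int
  with indices in 1..3 (for delta_1); delta_2 is given by p q r s.\<close>

type_synonym tqf = "nat \<Rightarrow> nat \<Rightarrow> int"

definition symc :: "tqf \<Rightarrow> nat \<Rightarrow> nat \<Rightarrow> int" where
  "symc a i j = (if i \<le> j then a i j else a j i)"

definition qf_eval :: "tqf \<Rightarrow> (nat \<Rightarrow> int) \<Rightarrow> int" where
  "qf_eval a v = (\<Sum>i\<in>{1..3}. \<Sum>j\<in>{i..3}. a i j * v i * v j)"

definition unitv :: "nat \<Rightarrow> nat \<Rightarrow> int" where
  "unitv i = (\<lambda>k. if k = i then 1 else 0)"

definition coef_of :: "((nat \<Rightarrow> int) \<Rightarrow> int) \<Rightarrow> tqf" where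
  "coef_of f i j = (if i = j then f (unitv i)
     else f (\<lambda>k. unitv i k + unitv j k) - f (unitv i) - f (unitv j))"

text \<open>(delta_1 A)(v) = A(v delta_1), v a row vector.\<close>
definition act1 :: "(nat \<Rightarrow> nat \<Rightarrow> int) \<Rightarrow> tqf \<Rightarrow> tqf" where
  "act1 d a = coef_of (\<lambda>v. qf_eval a (\<lambda>k. \<Sum>i\<in>{1..3}. v i * d i k))"

definition act :: "(nat \<Rightarrow> nat \<Rightarrow> int) \<Rightarrow> int \<Rightarrow> int \<Rightarrow> int \<Rightarrow> int \<Rightarrow> tqf \<Rightarrow> tqf \<Rightarrow> tqf \<times> tqf" where
  "act d p q r s A B =
     ((\<lambda>i j. p * act1 d A i j + q * act1 d B i j),
      (\<lambda>i j. r * act1 d A i j + s * act1 d B i j))"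

definition det3 :: "(nat \<Rightarrow> nat \<Rightarrow> 'a::comm_ring_1) \<Rightarrow> 'a" where
  "det3 m = m 1 1 * m 2 2 * m 3 3 + m 1 2 * m 2 3 * m 3 1 + m 1 3 * m 2 1 * m 3 2
          - m 1 3 * m 2 2 * m 3 1 - m 1 2 * m 2 1 * m 3 3 - m 1 1 * m 2 3 * m 3 2"

definition hmat :: "tqf \<Rightarrow> nat \<Rightarrow> nat \<Rightarrow> rat" where
  "hmat a i j = (if i = j then of_int (a i i) else of_int (symc a i j) / 2)"

definition bcubic :: "tqf \<Rightarrow> tqf \<Rightarrow> rat \<Rightarrow> rat \<Rightarrow> rat" where
  "bcubic A B u1 u2 = 4 * det3 (\<lambda>i j. u1 * hmat A i j - u2 * hmat B i j)"

definition cubic_disc :: "(rat \<Rightarrow> rat \<Rightarrow> rat) \<Rightarrow> rat" where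
  "cubic_disc f = (let a = f 1 0; d = f 0 1; s = f 1 1; t = f 1 (-1);
       b = (s - t) / 2 - d; c = (s + t) / 2 - a
     in b^2 * c^2 - 4 * a * c^3 - 4 * b^3 * d - 27 * a^2 * d^2 + 18 * a * b * c * d)"

definition nondegenerate :: "tqf \<Rightarrow> tqf \<Rightarrow> bool" where
  "nondegenerate A B \<longleftrightarrow> cubic_disc (bcubic A B) \<noteq> 0"

definition lam :: "tqf \<Rightarrow> tqf \<Rightarrow> nat \<Rightarrow> nat \<Rightarrow> nat \<Rightarrow> nat \<Rightarrow> int" where
  "lam A B i j k l = symc A i j * symc B k l - symc B i j * symc A k l"

definition Cc :: "tqf \<Rightarrow> tqf \<Rightarrow> nat \<Rightarrow> int" where
  "Cc A B i = (if i = 1 then lam A B 2 3 1 1 else if i = 2 then - lam A B 1 3 2 2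
               else lam A B 1 2 3 3)"

definition psgn :: "nat \<Rightarrow> nat \<Rightarrow> nat \<Rightarrow> int" where
  "psgn i j k = (if (i,j,k) \<in> {(1,2,3),(2,3,1),(3,1,2)} then 1 else -1)"

definition third :: "nat \<Rightarrow> nat \<Rightarrow> nat" where
  "third i j = 6 - i - j"

definition other :: "nat \<Rightarrow> nat" where
  "other i = (if i = 1 then 2 else 1)"

text \<open>Structure constants c_ij^r for i,j,r in {1,2,3}. (The values do not depend
  on the choices of permutation made; halving is exact.)\<close>
definition c3 :: "tqf \<Rightarrow> tqf \<Rightarrow> nat \<Rightarrow> nat \<Rightarrow> nat \<Rightarrow> int" where
  "c3 A B i j r =
    (if i = j then
       (if r = i then (let j' = other i; k' = third i j' in
                        psgn i j' k' * lam A B i k' i j' + Cc A B i)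
        else (let k' = third i r in psgn i r k' * lam A B i i i k'))
     else (let k = third i j in
       if r = i then (psgn i j k * lam A B i k j j + Cc A B j) div 2
       else if r = j then (psgn j i k * lam A B j k i i + Cc A B i) div 2
       else psgn i j k * lam A B j j i i))"

text \<open>c_ij^0, using k = other i (the paper allows any k different from i).\<close>
definition c0 :: "tqf \<Rightarrow> tqf \<Rightarrow> nat \<Rightarrow> nat \<Rightarrow> int" where
  "c0 A B i j = (let k = other i in
     \<Sum>r\<in>{1..3}. c3 A B j k r * c3 A B r i k - c3 A B i j r * c3 A B r k k)"

text \<open>Full multiplication table on the basis alpha_0 = 1, alpha_1, alpha_2, alpha_3.\<close>
definition sc :: "tqf \<Rightarrow> tqf \<Rightarrow> nat \<Rightarrow> nat \<Rightarrow> nat \<Rightarrow> int" where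
  "sc A B i j k =
    (if i = 0 then (if k = j then 1 else 0)
     else if j = 0 then (if k = i then 1 else 0)
     else if k = 0 then c0 A B i j else c3 A B i j k)"

text \<open>Elements of Q(A,B): coordinate vectors x (x k = coefficient of alpha_k,
  x k = 0 for k > 3).\<close>
definition qmult :: "tqf \<Rightarrow> tqf \<Rightarrow> (nat \<Rightarrow> int) \<Rightarrow> (nat \<Rightarrow> int) \<Rightarrow> nat \<Rightarrow> int" where
  "qmult A B x y = (\<lambda>k. if k \<le> 3 then
      (\<Sum>i\<in>{0..3}. \<Sum>j\<in>{0..3}. x i * y j * sc A B i j k) else 0)"

definition QR :: "tqf \<Rightarrow> tqf \<Rightarrow> (nat \<Rightarrow> int) ring" where
  "QR A B = \<lparr>carrier = {x. \<forall>k>3. x k = 0}, mult = qmult A B, one = unitv 0,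
             zero = (\<lambda>k. 0), add = (\<lambda>x y k. x k + y k)\<rparr>"

end

theory Submission
  imports Defs
begin

text \<open>The homomorphism is sought in the form \<open>1 \<mapsto> 1\<close>,
  \<open>\<beta>\<^sub>i \<mapsto> n\<^sub>i + det \<delta>\<^sub>1 det \<delta>\<^sub>2 \<Sum>\<^sub>k (\<delta>\<^sub>1)\<^sub>i\<^sub>k \<alpha>\<^sub>k\<close> with integers \<open>n\<^sub>i\<close>.
  Such an additive map is injective because its matrix is nonsingular, and it is multiplicative
  as soon as it is so on the basis. The action of \<open>\<delta>\<^sub>2\<close> multiplies every structure constant
  \<open>c\<^sub>i\<^sub>j\<^sup>k\<close> by \<open>det \<delta>\<^sub>2\<close> (and \<open>c\<^sub>i\<^sub>j\<^sup>0\<close> by its square), so \<open>\<beta>\<^sub>i \<mapsto> det \<delta>\<^sub>2 \<alpha>\<^sub>i\<close> handles it.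
  For \<open>\<delta>\<^sub>1\<close>, the property that suitable \<open>n\<^sub>i\<close> exist for every pair of forms is stable under
  matrix products, since the maps compose; it holds for elementary transvections and dilations
  by direct computation with the structure constants, and Euclidean row reduction writes any
  integer matrix as such a product.\<close>

lemma sum_1_3: "(\<Sum>i\<in>{1..3::nat}. f i) = f 1 + f 2 + f 3"
proof -
  have "{1..3::nat} = {1,2,3}" by auto
  then show ?thesis by (simp add: ac_simps)
qed

lemma sum_Suc0_3: "(\<Sum>i\<in>{Suc 0..3}. f i) = f 1 + f 2 + f 3"
  using sum_1_3 by simp

lemma sum_0_3: "(\<Sum>i\<in>{0..3::nat}. f i) = f 0 + f 1 + f 2 + f 3"
proof -
  have "{0..3::nat} = {0,1,2,3}" by auto
  then show ?thesis by (simp add: ac_simps)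
qed

lemma sum_2_3: "(\<Sum>i\<in>{2..3::nat}. f i) = f 2 + f 3"
proof -
  have "{2..3::nat} = {2,3}" by auto
  then show ?thesis by (simp add: ac_simps)
qed

lemma ball_1_3: "(\<forall>i\<in>{1..3::nat}. P i) \<longleftrightarrow> P 1 \<and> P 2 \<and> P 3"
proof -
  have "{1..3::nat} = {1,2,3}" by auto
  then show ?thesis by simp
qed

lemma ball_0_3: "(\<forall>i\<in>{0..3::nat}. P i) \<longleftrightarrow> P 0 \<and> P 1 \<and> P 2 \<and> P 3"
proof -
  have "{0..3::nat} = {0,1,2,3}" by auto
  then show ?thesis by simp
qed

lemma le_3_cases: "(i::nat) \<le> 3 \<Longrightarrow> i = 0 \<or> i = 1 \<or> i = 2 \<or> i = 3"
  by auto

lemma qf_eval_expand: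
  "qf_eval a v = a 1 1 * v 1 * v 1 + a 1 2 * v 1 * v 2 + a 1 3 * v 1 * v 3
     + a 2 2 * v 2 * v 2 + a 2 3 * v 2 * v 3 + a 3 3 * v 3 * v 3"
  by (simp add: qf_eval_def sum_1_3 sum_Suc0_3 sum_2_3 algebra_simps)

lemma det3_scale: "det3 (\<lambda>i k. c * d i k) = c ^ 3 * det3 d"
  by (simp add: det3_def power3_eq_cube algebra_simps)

lemma det3_cong:
  "(\<And>i k. i \<in> {1..3} \<Longrightarrow> k \<in> {1..3} \<Longrightarrow> d i k = d' i k) \<Longrightarrow> det3 d = det3 d'"
  unfolding det3_def by simp

lemma det3_left_kernel_trivial:
  fixes z :: "nat \<Rightarrow> int"
  assumes det: "det3 M \<noteq> 0"
    and col1: "z 1 * M 1 1 + z 2 * M 2 1 + z 3 * M 3 1 = 0"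
    and col2: "z 1 * M 1 2 + z 2 * M 2 2 + z 3 * M 3 2 = 0"
    and col3: "z 1 * M 1 3 + z 2 * M 2 3 + z 3 * M 3 3 = 0"
  shows "z 1 = 0 \<and> z 2 = 0 \<and> z 3 = 0"
proof -
  have "det3 M * z 1 = (M 2 2 * M 3 3 - M 2 3 * M 3 2) * (z 1 * M 1 1 + z 2 * M 2 1 + z 3 * M 3 1)
     + (M 2 3 * M 3 1 - M 2 1 * M 3 3) * (z 1 * M 1 2 + z 2 * M 2 2 + z 3 * M 3 2)
     + (M 2 1 * M 3 2 - M 2 2 * M 3 1) * (z 1 * M 1 3 + z 2 * M 2 3 + z 3 * M 3 3)"
   "det3 M * z 2 = (M 1 3 * M 3 2 - M 1 2 * M 3 3) * (z 1 * M 1 1 + z 2 * M 2 1 + z 3 * M 3 1)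
     + (M 1 1 * M 3 3 - M 1 3 * M 3 1) * (z 1 * M 1 2 + z 2 * M 2 2 + z 3 * M 3 2)
     + (M 1 2 * M 3 1 - M 1 1 * M 3 2) * (z 1 * M 1 3 + z 2 * M 2 3 + z 3 * M 3 3)"
   "det3 M * z 3 = (M 1 2 * M 2 3 - M 1 3 * M 2 2) * (z 1 * M 1 1 + z 2 * M 2 1 + z 3 * M 3 1)
     + (M 1 3 * M 2 1 - M 1 1 * M 2 3) * (z 1 * M 1 2 + z 2 * M 2 2 + z 3 * M 3 2)
     + (M 1 1 * M 2 2 - M 1 2 * M 2 1) * (z 1 * M 1 3 + z 2 * M 2 3 + z 3 * M 3 3)"
    unfolding det3_def by (simp_all add: algebra_simps)
  then have "det3 M * z 1 = 0" "det3 M * z 2 = 0" "det3 M * z 3 = 0"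
    unfolding col1 col2 col3 by simp_all
  with det show ?thesis by simp
qed

definition mat3_mult :: "(nat \<Rightarrow> nat \<Rightarrow> int) \<Rightarrow> (nat \<Rightarrow> nat \<Rightarrow> int) \<Rightarrow> nat \<Rightarrow> nat \<Rightarrow> int" where
  "mat3_mult d e = (\<lambda>i k. \<Sum>j\<in>{1..3}. d i j * e j k)"

lemma det3_mat3_mult: "det3 (mat3_mult d e) = det3 d * det3 e"
  unfolding det3_def mat3_mult_def sum_1_3 by (simp add: algebra_simps)

lemma mat3_mult_scalar_left:
  "i \<in> {1..3} \<Longrightarrow> mat3_mult (\<lambda>i k. if i = k then c else 0) M i k = c * M i k"
  by (auto dest!: le_3_cases simp: mat3_mult_def sum_Suc0_3)

text \<open>Elements of \<open>Q\<close> are coordinate vectors, so \<open>qmap n M\<close> is the additive map fixing 1 with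
  \<open>\<beta>\<^sub>i \<mapsto> n\<^sub>i + \<Sum>\<^sub>k M\<^sub>i\<^sub>k \<alpha>\<^sub>k\<close>.\<close>
definition qmap :: "(nat \<Rightarrow> int) \<Rightarrow> (nat \<Rightarrow> nat \<Rightarrow> int) \<Rightarrow> (nat \<Rightarrow> int) \<Rightarrow> nat \<Rightarrow> int" where
  "qmap n M x = (\<lambda>k. if k = 0 then x 0 + (\<Sum>i\<in>{1..3}. x i * n i)
      else if k \<le> 3 then (\<Sum>i\<in>{1..3}. x i * M i k) else 0)"

definition qmap_multiplicative :: "tqf \<Rightarrow> tqf \<Rightarrow> tqf \<Rightarrow> tqf \<Rightarrow> (nat \<Rightarrow> int) \<Rightarrow> (nat \<Rightarrow> nat \<Rightarrow> int) \<Rightarrow> bool" where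
  "qmap_multiplicative A' B' A B n M \<longleftrightarrow>
     (\<forall>x y. qmap n M (qmult A' B' x y) = qmult A B (qmap n M x) (qmap n M y))"

definition qmap_multiplicative_on_basis :: "tqf \<Rightarrow> tqf \<Rightarrow> tqf \<Rightarrow> tqf \<Rightarrow> (nat \<Rightarrow> int) \<Rightarrow> (nat \<Rightarrow> nat \<Rightarrow> int) \<Rightarrow> bool" where
  "qmap_multiplicative_on_basis A' B' A B n M \<longleftrightarrow> (\<forall>i\<in>{1..3}. \<forall>j\<in>{1..3}.
     qmap n M (qmult A' B' (unitv i) (unitv j)) = qmult A B (qmap n M (unitv i)) (qmap n M (unitv j)))"

lemma qmap_unitv:
  "i \<in> {1..3} \<Longrightarrow> qmap n M (unitv i) = (\<lambda>k. if k = 0 then n i else if k \<le> 3 then M i k else 0)"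
  by (rule ext) (auto dest!: le_3_cases simp: qmap_def unitv_def sum_1_3 sum_Suc0_3)

lemma qmap_one: "qmap n M (unitv 0) = unitv 0"
  by (rule ext) (simp add: qmap_def unitv_def sum_1_3)

lemma qmap_add: "qmap n M (\<lambda>k. x k + y k) = (\<lambda>k. qmap n M x k + qmap n M y k)"
  by (rule ext) (simp add: qmap_def sum_1_3 sum_Suc0_3 distrib_right)

lemma qmap_high: "k > 3 \<Longrightarrow> qmap n M x k = 0"
  by (simp add: qmap_def)

lemma qmap_expand: "qmap n M x k = (\<Sum>i\<in>{0..3}. x i * qmap n M (unitv i) k)"
  by (simp add: qmap_def sum_0_3 sum_1_3 sum_Suc0_3 unitv_def)

lemma qmap_cong:
  "(\<And>i k. i \<in> {1..3} \<Longrightarrow> k \<in> {1..3} \<Longrightarrow> M i k = M' i k) \<Longrightarrow> qmap n M = qmap n M'"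
  by (intro ext) (auto dest!: le_3_cases simp: qmap_def sum_1_3 sum_Suc0_3)

lemma qmap_qmap:
  "qmap n M (qmap n' M' x) = qmap (\<lambda>i. n' i + (\<Sum>l\<in>{1..3}. M' i l * n l)) (mat3_mult M' M) x"
  by (rule ext, rename_tac k, case_tac "k \<le> 3")
    (auto dest!: le_3_cases simp: qmap_def mat3_mult_def sum_1_3 sum_Suc0_3 algebra_simps)

lemma qmult_unitv:
  "i \<le> 3 \<Longrightarrow> j \<le> 3 \<Longrightarrow> qmult A B (unitv i) (unitv j) k = (if k \<le> 3 then sc A B i j k else 0)"
  by (auto dest!: le_3_cases simp: qmult_def unitv_def sum_0_3 sc_def)

lemma qmult_one_left: "\<forall>k>3. y k = 0 \<Longrightarrow> qmult A B (unitv 0) y = y"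
  by (rule ext, rename_tac k, case_tac "k \<le> 3")
    (auto dest!: le_3_cases simp: qmult_def unitv_def sum_0_3 sc_def)

lemma qmult_one_right: "\<forall>k>3. y k = 0 \<Longrightarrow> qmult A B y (unitv 0) = y"
  by (rule ext, rename_tac k, case_tac "k \<le> 3")
    (auto dest!: le_3_cases simp: qmult_def unitv_def sum_0_3 sc_def)

lemma sum_bilinear:
  fixes x y :: "nat \<Rightarrow> int"
  shows "(\<Sum>a\<in>S. \<Sum>b\<in>S. (\<Sum>i\<in>I. x i * R i a) * (\<Sum>j\<in>I. y j * R j b) * s a b)
       = (\<Sum>i\<in>I. \<Sum>j\<in>I. x i * y j * (\<Sum>a\<in>S. \<Sum>b\<in>S. R i a * R j b * s a b))"
proof -
  have "(\<Sum>a\<in>S. \<Sum>b\<in>S. (\<Sum>i\<in>I. x i * R i a) * (\<Sum>j\<in>I. y j * R j b) * s a b)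
      = (\<Sum>a\<in>S. \<Sum>b\<in>S. \<Sum>i\<in>I. \<Sum>j\<in>I. x i * y j * (R i a * R j b * s a b))"
    by (intro sum.cong refl, subst sum_product, subst sum_distrib_right)
      (intro sum.cong refl, subst sum_distrib_right, simp add: mult_ac)
  also have "\<dots> = (\<Sum>a\<in>S. \<Sum>i\<in>I. \<Sum>b\<in>S. \<Sum>j\<in>I. x i * y j * (R i a * R j b * s a b))"
    by (intro sum.cong refl sum.swap)
  also have "\<dots> = (\<Sum>i\<in>I. \<Sum>a\<in>S. \<Sum>j\<in>I. \<Sum>b\<in>S. x i * y j * (R i a * R j b * s a b))"
    by (subst sum.swap) (intro sum.cong refl sum.swap)
  also have "\<dots> = (\<Sum>i\<in>I. \<Sum>j\<in>I. \<Sum>a\<in>S. \<Sum>b\<in>S. x i * y j * (R i a * R j b * s a b))"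
    by (intro sum.cong refl sum.swap)
  also have "\<dots> = (\<Sum>i\<in>I. \<Sum>j\<in>I. x i * y j * (\<Sum>a\<in>S. \<Sum>b\<in>S. R i a * R j b * s a b))"
    by (simp add: sum_distrib_left)
  finally show ?thesis .
qed

lemma qmap_multiplicative_on_basis_all:
  assumes "qmap_multiplicative_on_basis A' B' A B n M" "i \<le> 3" "j \<le> 3"
  shows "qmap n M (qmult A' B' (unitv i) (unitv j)) = qmult A B (qmap n M (unitv i)) (qmap n M (unitv j))"
proof -
  have unitv_carrier: "\<forall>k>3. unitv i k = 0" "\<forall>k>3. unitv j k = 0"
    using assms(2,3) by (auto simp: unitv_def)
  consider "i = 0" | "j = 0" | "i \<in> {1..3}" "j \<in> {1..3}" using assms(2,3) by force
  then show ?thesis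
  proof cases
    case 1
    then show ?thesis
      using assms(3) by (simp add: qmult_one_left qmult_one_right unitv_carrier qmap_one qmap_high)
  next
    case 2
    then show ?thesis
      using assms(2) by (simp add: qmult_one_left qmult_one_right unitv_carrier qmap_one qmap_high)
  next
    case 3
    then show ?thesis using assms(1) unfolding qmap_multiplicative_on_basis_def by blast
  qed
qed

lemma qmap_multiplicative_if_on_basis:
  assumes basis: "qmap_multiplicative_on_basis A' B' A B n M"
  shows "qmap_multiplicative A' B' A B n M"
  unfolding qmap_multiplicative_def
proof (intro allI ext)
  fix x y :: "nat \<Rightarrow> int" and k :: nat
  define R where "R i = qmap n M (unitv i)" for i
  show "qmap n M (qmult A' B' x y) k = qmult A B (qmap n M x) (qmap n M y) k"
  proof (cases "k \<le> 3")
    case False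
    then show ?thesis by (simp add: qmap_def qmult_def)
  next
    case True
    have "qmap n M (qmult A' B' x y) k = (\<Sum>a\<in>{0..3}. qmult A' B' x y a * R a k)"
      unfolding R_def by (rule qmap_expand)
    also have "\<dots> = (\<Sum>a\<in>{0..3}. \<Sum>i\<in>{0..3}. \<Sum>j\<in>{0..3}. x i * y j * (sc A' B' i j a * R a k))"
      by (intro sum.cong refl) (simp add: qmult_def sum_distrib_left sum_distrib_right mult_ac)
    also have "\<dots> = (\<Sum>i\<in>{0..3}. \<Sum>j\<in>{0..3}. \<Sum>a\<in>{0..3}. x i * y j * (sc A' B' i j a * R a k))"
      by (subst sum.swap) (intro sum.cong refl sum.swap)
    also have "\<dots> = (\<Sum>i\<in>{0..3}. \<Sum>j\<in>{0..3}. x i * y j * (\<Sum>a\<in>{0..3}. sc A' B' i j a * R a k))"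
      by (simp add: sum_distrib_left)
    also have "\<dots> = (\<Sum>i\<in>{0..3}. \<Sum>j\<in>{0..3}. x i * y j * qmap n M (qmult A' B' (unitv i) (unitv j)) k)"
      unfolding R_def qmap_expand[of n M "qmult A' B' (unitv _) (unitv _)"]
      by (intro sum.cong refl) (simp add: sum_distrib_left qmult_unitv)
    also have "\<dots> = (\<Sum>i\<in>{0..3}. \<Sum>j\<in>{0..3}. x i * y j * qmult A B (R i) (R j) k)"
      unfolding R_def by (intro sum.cong refl) (simp add: qmap_multiplicative_on_basis_all[OF basis])
    also have "\<dots> = (\<Sum>i\<in>{0..3}. \<Sum>j\<in>{0..3}. x i * y j * (\<Sum>a\<in>{0..3}. \<Sum>b\<in>{0..3}. R i a * R j b * sc A B a b k))"
      using True by (simp add: qmult_def)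
    also have "\<dots> = (\<Sum>a\<in>{0..3}. \<Sum>b\<in>{0..3}. (\<Sum>i\<in>{0..3}. x i * R i a) * (\<Sum>j\<in>{0..3}. y j * R j b) * sc A B a b k)"
      by (rule sum_bilinear[symmetric])
    also have "\<dots> = qmult A B (qmap n M x) (qmap n M y) k"
      using True unfolding R_def by (simp add: qmult_def qmap_expand[symmetric])
    finally show ?thesis .
  qed
qed

lemma qmap_multiplicative_comp:
  assumes "qmap_multiplicative A1 B1 A B n M" "qmap_multiplicative A' B' A1 B1 n' M'"
  shows "qmap_multiplicative A' B' A B (\<lambda>i. n' i + (\<Sum>l\<in>{1..3}. M' i l * n l)) (mat3_mult M' M)"
  using assms unfolding qmap_multiplicative_def qmap_qmap[symmetric] by simp

lemma qmap_multiplicative_cong: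
  "qmap_multiplicative A' B' A B n M \<Longrightarrow> (\<And>i k. i \<in> {1..3} \<Longrightarrow> k \<in> {1..3} \<Longrightarrow> M i k = M' i k)
    \<Longrightarrow> qmap_multiplicative A' B' A B n M'"
  unfolding qmap_multiplicative_def using qmap_cong by metis

lemma qmap_ring_hom:
  assumes "qmap_multiplicative A' B' A B n M"
  shows "qmap n M \<in> ring_hom (QR A' B') (QR A B)"
  using assms
  by (intro ring_hom_memI) (auto simp: QR_def qmap_multiplicative_def qmap_high qmap_add qmap_one)

lemma qmap_inj_on:
  assumes "det3 M \<noteq> 0"
  shows "inj_on (qmap n M) (carrier (QR A' B'))"
proof (rule inj_onI)
  fix x y assume x: "x \<in> carrier (QR A' B')" and y: "y \<in> carrier (QR A' B')"
    and eq: "qmap n M x = qmap n M y"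
  define z where "z k = x k - y k" for k
  have "z 1 * M 1 k + z 2 * M 2 k + z 3 * M 3 k = 0" if "k \<in> {1..3}" for k
    using that fun_cong[OF eq, of k] by (auto simp: z_def qmap_def sum_1_3 sum_Suc0_3 algebra_simps)
  then have "z 1 = 0 \<and> z 2 = 0 \<and> z 3 = 0"
    by (intro det3_left_kernel_trivial[OF assms]) auto
  then have "x 1 = y 1" "x 2 = y 2" "x 3 = y 3"
    by (simp_all add: z_def)
  moreover have "x 0 = y 0"
    using fun_cong[OF eq, of 0] calculation by (simp add: qmap_def sum_Suc0_3)
  ultimately have "x k = y k" if "k \<le> 3" for k
    using that by (auto dest!: le_3_cases)
  then show "x = y"
    using x y by (intro ext, rename_tac k, case_tac "k \<le> 3") (auto simp: QR_def)
qed

lemma c3_table [simp]: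
  "c3 A B 1 1 1 = -(A 1 1)*(B 2 3) - (A 1 2)*(B 1 3) + (A 1 3)*(B 1 2) + (A 2 3)*(B 1 1)"
  "c3 A B 1 1 2 = (A 1 1)*(B 1 3) - (A 1 3)*(B 1 1)"
  "c3 A B 1 1 3 = -(A 1 1)*(B 1 2) + (A 1 2)*(B 1 1)"
  "c3 A B 1 2 1 = 0"
  "c3 A B 1 2 2 = 0"
  "c3 A B 1 2 3 = -(A 1 1)*(B 2 2) + (A 2 2)*(B 1 1)"
  "c3 A B 1 3 1 = 0"
  "c3 A B 1 3 2 = (A 1 1)*(B 3 3) - (A 3 3)*(B 1 1)"
  "c3 A B 1 3 3 = -(A 1 1)*(B 2 3) + (A 2 3)*(B 1 1)"
  "c3 A B 2 1 1 = 0"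
  "c3 A B 2 1 2 = 0"
  "c3 A B 2 1 3 = -(A 1 1)*(B 2 2) + (A 2 2)*(B 1 1)"
  "c3 A B 2 2 1 = -(A 2 2)*(B 2 3) + (A 2 3)*(B 2 2)"
  "c3 A B 2 2 2 = (A 1 2)*(B 2 3) - (A 1 3)*(B 2 2) + (A 2 2)*(B 1 3) - (A 2 3)*(B 1 2)"
  "c3 A B 2 2 3 = -(A 1 2)*(B 2 2) + (A 2 2)*(B 1 2)"
  "c3 A B 2 3 1 = -(A 2 2)*(B 3 3) + (A 3 3)*(B 2 2)"
  "c3 A B 2 3 2 = (A 1 2)*(B 3 3) - (A 3 3)*(B 1 2)"
  "c3 A B 2 3 3 = -(A 1 3)*(B 2 2) + (A 2 2)*(B 1 3)"
  "c3 A B 3 1 1 = 0"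
  "c3 A B 3 1 2 = (A 1 1)*(B 3 3) - (A 3 3)*(B 1 1)"
  "c3 A B 3 1 3 = -(A 1 1)*(B 2 3) + (A 2 3)*(B 1 1)"
  "c3 A B 3 2 1 = -(A 2 2)*(B 3 3) + (A 3 3)*(B 2 2)"
  "c3 A B 3 2 2 = (A 1 2)*(B 3 3) - (A 3 3)*(B 1 2)"
  "c3 A B 3 2 3 = -(A 1 3)*(B 2 2) + (A 2 2)*(B 1 3)"
  "c3 A B 3 3 1 = -(A 2 3)*(B 3 3) + (A 3 3)*(B 2 3)"
  "c3 A B 3 3 2 = (A 1 3)*(B 3 3) - (A 3 3)*(B 1 3)"
  "c3 A B 3 3 3 = (A 1 2)*(B 3 3) - (A 1 3)*(B 2 3) + (A 2 3)*(B 1 3) - (A 3 3)*(B 1 2)"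
  by (simp_all add: c3_def psgn_def third_def other_def Cc_def lam_def symc_def Let_def)

lemmas c3_table_Suc = c3_table[unfolded One_nat_def]

lemma qmap_multiplicative_on_basisI:
  assumes "\<forall>i\<in>{1..3}. \<forall>j\<in>{1..3}. \<forall>k\<in>{0..3}.
     (\<Sum>a\<in>{0..3}. \<Sum>b\<in>{0..3}. (if a = 0 then n i else M i a) * (if b = 0 then n j else M j b) * sc A B a b k)
     = (if k = 0 then sc A' B' i j 0 + (\<Sum>l\<in>{1..3}. sc A' B' i j l * n l)
        else (\<Sum>l\<in>{1..3}. sc A' B' i j l * M l k))"
  shows "qmap_multiplicative_on_basis A' B' A B n M"
  unfolding qmap_multiplicative_on_basis_def
proof (intro ballI ext)
  fix i j k assume i: "i \<in> {1..3::nat}" and j: "j \<in> {1..3::nat}"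
  have coord: "qmap n M (unitv l) a = (if a = 0 then n l else M l a)" if "l \<in> {1..3}" "a \<le> 3" for l a
    using that by (simp add: qmap_unitv)
  show "qmap n M (qmult A' B' (unitv i) (unitv j)) k = qmult A B (qmap n M (unitv i)) (qmap n M (unitv j)) k"
  proof (cases "k \<le> 3")
    case False
    then show ?thesis by (simp add: qmap_def qmult_def)
  next
    case True
    have "qmult A B (qmap n M (unitv i)) (qmap n M (unitv j)) k =
      (\<Sum>a\<in>{0..3}. \<Sum>b\<in>{0..3}. (if a = 0 then n i else M i a) * (if b = 0 then n j else M j b) * sc A B a b k)"
      using i j True by (simp add: qmult_def coord)
    also have "\<dots> = qmap n M (qmult A' B' (unitv i) (unitv j)) k"
      using assms i j True by (auto simp: qmap_def qmult_unitv)
    finally show ?thesis by simp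
  qed
qed

lemma act1_expand:
  assumes "i \<in> {1..3}" "j \<in> {1..3}"
  shows "act1 d A i j = (if i = j then qf_eval A (\<lambda>k. d i k)
     else qf_eval A (\<lambda>k. d i k + d j k) - qf_eval A (\<lambda>k. d i k) - qf_eval A (\<lambda>k. d j k))"
proof -
  have unitv_row: "(\<Sum>l\<in>{1..3}. unitv i l * d l k) = d i k" if "i \<in> {1..3}" for i k
    using that unfolding unitv_def by (simp add: if_distrib[of "\<lambda>x. x * _"] cong: if_cong)
  show ?thesis
    unfolding act1_def coef_of_def distrib_right sum.distrib unitv_row[OF assms(1)] unitv_row[OF assms(2)]
    by simp
qed

definition transvection :: "nat \<Rightarrow> nat \<Rightarrow> int \<Rightarrow> nat \<Rightarrow> nat \<Rightarrow> int" where
  "transvection a b t i j = (if i = j then 1 else if i = a \<and> j = b then t else 0)"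

definition dilation :: "nat \<Rightarrow> int \<Rightarrow> nat \<Rightarrow> nat \<Rightarrow> int" where
  "dilation a m i j = (if i = j then (if i = a then m else 1) else 0)"

lemmas generator_simps = c3_table_Suc sc_def c0_def sum_0_3 sum_1_3 sum_Suc0_3
  act1_expand qf_eval_expand transvection_def dilation_def det3_def other_def Let_def

lemma qmap_multiplicative_transvection_12:
  "qmap_multiplicative (act1 (transvection 1 2 t) A) (act1 (transvection 1 2 t) B) A B
     (\<lambda>i. if i = 1 then -(A 1 2)*(B 2 3)*t + (A 1 3)*(B 2 2)*t - (A 2 2)*(B 1 3)*t - (A 2 2)*(B 2 3)*t^2 + (A 2 3)*(B 1 2)*t + (A 2 3)*(B 2 2)*t^2
       else if i = 2 then (A 2 2)*(B 2 3)*t - (A 2 3)*(B 2 2)*t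
       else (A 2 2)*(B 3 3)*t - (A 3 3)*(B 2 2)*t)
     (\<lambda>i k. det3 (transvection 1 2 t) * transvection 1 2 t i k)"
  by (rule qmap_multiplicative_if_on_basis, rule qmap_multiplicative_on_basisI,
      unfold ball_1_3 ball_0_3, intro conjI) (simp_all add: generator_simps algebra_simps power2_eq_square)

lemma qmap_multiplicative_transvection_13:
  "qmap_multiplicative (act1 (transvection 1 3 t) A) (act1 (transvection 1 3 t) B) A B
     (\<lambda>i. if i = 1 then -(A 1 2)*(B 3 3)*t + (A 3 3)*(B 1 2)*t
       else if i = 2 then (A 2 2)*(B 3 3)*t - (A 3 3)*(B 2 2)*t
       else (A 2 3)*(B 3 3)*t - (A 3 3)*(B 2 3)*t)
     (\<lambda>i k. det3 (transvection 1 3 t) * transvection 1 3 t i k)"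
  by (rule qmap_multiplicative_if_on_basis, rule qmap_multiplicative_on_basisI,
      unfold ball_1_3 ball_0_3, intro conjI) (simp_all add: generator_simps algebra_simps power2_eq_square)

lemma qmap_multiplicative_transvection_21:
  "qmap_multiplicative (act1 (transvection 2 1 t) A) (act1 (transvection 2 1 t) B) A B
     (\<lambda>i. if i = 1 then -(A 1 1)*(B 1 3)*t + (A 1 3)*(B 1 1)*t
       else if i = 2 then (A 1 1)*(B 1 3)*t^2 + (A 1 1)*(B 2 3)*t + (A 1 2)*(B 1 3)*t - (A 1 3)*(B 1 1)*t^2 - (A 1 3)*(B 1 2)*t - (A 2 3)*(B 1 1)*t
       else (A 1 1)*(B 3 3)*t - (A 3 3)*(B 1 1)*t)
     (\<lambda>i k. det3 (transvection 2 1 t) * transvection 2 1 t i k)"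
  by (rule qmap_multiplicative_if_on_basis, rule qmap_multiplicative_on_basisI,
      unfold ball_1_3 ball_0_3, intro conjI) (simp_all add: generator_simps algebra_simps power2_eq_square)

lemma qmap_multiplicative_transvection_23:
  "qmap_multiplicative (act1 (transvection 2 3 t) A) (act1 (transvection 2 3 t) B) A B
     (\<lambda>i. if i = 1 then -(A 1 1)*(B 3 3)*t + (A 3 3)*(B 1 1)*t
       else 0)
     (\<lambda>i k. det3 (transvection 2 3 t) * transvection 2 3 t i k)"
  by (rule qmap_multiplicative_if_on_basis, rule qmap_multiplicative_on_basisI,
      unfold ball_1_3 ball_0_3, intro conjI) (simp_all add: generator_simps algebra_simps power2_eq_square)

lemma qmap_multiplicative_transvection_31:
  "qmap_multiplicative (act1 (transvection 3 1 t) A) (act1 (transvection 3 1 t) B) A B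
     (\<lambda>i. if i = 1 then 0 else if i = 2 then -(A 1 1)*(B 2 2)*t + (A 2 2)*(B 1 1)*t
       else -(A 1 1)*(B 1 2)*t^2 + (A 1 2)*(B 1 1)*t^2 + (A 1 2)*(B 1 3)*t - (A 1 3)*(B 1 2)*t)
     (\<lambda>i k. det3 (transvection 3 1 t) * transvection 3 1 t i k)"
  by (rule qmap_multiplicative_if_on_basis, rule qmap_multiplicative_on_basisI,
      unfold ball_1_3 ball_0_3, intro conjI) (simp_all add: generator_simps algebra_simps power2_eq_square)

lemma qmap_multiplicative_transvection_32:
  "qmap_multiplicative (act1 (transvection 3 2 t) A) (act1 (transvection 3 2 t) B) A B
     (\<lambda>i. if i = 1 then -(A 1 1)*(B 2 2)*t + (A 2 2)*(B 1 1)*t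
       else 0)
     (\<lambda>i k. det3 (transvection 3 2 t) * transvection 3 2 t i k)"
  by (rule qmap_multiplicative_if_on_basis, rule qmap_multiplicative_on_basisI,
      unfold ball_1_3 ball_0_3, intro conjI) (simp_all add: generator_simps algebra_simps power2_eq_square)

lemma qmap_multiplicative_dilation:
  assumes "a \<in> {1..3}"
  shows "qmap_multiplicative (act1 (dilation a t) A) (act1 (dilation a t) B) A B (\<lambda>_. 0)
     (\<lambda>i k. det3 (dilation a t) * dilation a t i k)"
proof -
  have "a = 1 \<or> a = 2 \<or> a = 3"
    using assms by auto
  then show ?thesis
    by (elim disjE; simp only:; intro qmap_multiplicative_if_on_basis qmap_multiplicative_on_basisI,
        unfold ball_1_3 ball_0_3, intro conjI) (simp_all add: generator_simps algebra_simps)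
qed

definition liftable :: "(nat \<Rightarrow> nat \<Rightarrow> int) \<Rightarrow> bool" where
  "liftable d \<longleftrightarrow> (\<forall>A B. \<exists>n. qmap_multiplicative (act1 d A) (act1 d B) A B n (\<lambda>i k. det3 d * d i k))"

lemma liftable_transvection:
  assumes "a \<in> {1..3}" "b \<in> {1..3}" "a \<noteq> b"
  shows "liftable (transvection a b t)"
proof -
  have "\<forall>a\<in>{1..3}. \<forall>b\<in>{1..3}. a \<noteq> b \<longrightarrow> liftable (transvection a b t)"
    unfolding ball_1_3 liftable_def
    using qmap_multiplicative_transvection_12 qmap_multiplicative_transvection_13
      qmap_multiplicative_transvection_21 qmap_multiplicative_transvection_23
      qmap_multiplicative_transvection_31 qmap_multiplicative_transvection_32
    by blast
  then show ?thesis
    using assms by blast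
qed

lemma liftable_dilation: "a \<in> {1..3} \<Longrightarrow> liftable (dilation a t)"
  unfolding liftable_def using qmap_multiplicative_dilation by blast

lemma qf_eval_act1: "qf_eval (act1 e A) w = qf_eval A (\<lambda>k. \<Sum>i\<in>{1..3}. w i * e i k)"
  by (simp add: qf_eval_expand act1_expand sum_1_3 sum_Suc0_3 algebra_simps)

lemma act1_mat3_mult: "act1 (mat3_mult d e) A = act1 d (act1 e A)"
proof -
  have "(\<lambda>k. \<Sum>i\<in>{1..3}. v i * mat3_mult d e i k) = (\<lambda>k. \<Sum>i\<in>{1..3}. (\<Sum>j\<in>{1..3}. v j * d j i) * e i k)"
    for v :: "nat \<Rightarrow> int"
    by (rule ext) (simp add: mat3_mult_def sum_1_3 sum_Suc0_3 algebra_simps)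
  then have "(\<lambda>v. qf_eval A (\<lambda>k. \<Sum>i\<in>{1..3}. v i * mat3_mult d e i k))
      = (\<lambda>v. qf_eval (act1 e A) (\<lambda>k. \<Sum>i\<in>{1..3}. v i * d i k))"
    by (simp add: qf_eval_act1)
  then show ?thesis
    unfolding act1_def by simp
qed

lemma act1_cong:
  "(\<And>i k. i \<in> {1..3} \<Longrightarrow> k \<in> {1..3} \<Longrightarrow> d i k = d' i k) \<Longrightarrow> act1 d A = act1 d' A"
  unfolding act1_def by (simp add: qf_eval_expand sum_1_3)

lemma liftable_mat3_mult:
  assumes "liftable d" "liftable e"
  shows "liftable (mat3_mult d e)"
  unfolding liftable_def
proof (intro allI)
  fix A B
  obtain ne where e: "qmap_multiplicative (act1 e A) (act1 e B) A B ne (\<lambda>i k. det3 e * e i k)"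
    using assms(2) unfolding liftable_def by blast
  obtain nd where d: "qmap_multiplicative (act1 d (act1 e A)) (act1 d (act1 e B)) (act1 e A) (act1 e B)
      nd (\<lambda>i k. det3 d * d i k)"
    using assms(1) unfolding liftable_def by blast
  have "mat3_mult (\<lambda>i k. det3 d * d i k) (\<lambda>i k. det3 e * e i k) = (\<lambda>i k. det3 (mat3_mult d e) * mat3_mult d e i k)"
    unfolding det3_mat3_mult by (intro ext) (simp add: mat3_mult_def sum_distrib_left mult_ac)
  then show "\<exists>n. qmap_multiplicative (act1 (mat3_mult d e) A) (act1 (mat3_mult d e) B) A B n
      (\<lambda>i k. det3 (mat3_mult d e) * mat3_mult d e i k)"
    using qmap_multiplicative_comp[OF e d] unfolding act1_mat3_mult by auto
qed

lemma liftable_cong: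
  assumes "liftable d" and eq: "\<And>i k. i \<in> {1..3} \<Longrightarrow> k \<in> {1..3} \<Longrightarrow> d i k = d' i k"
  shows "liftable d'"
  unfolding liftable_def
proof (intro allI)
  fix A B
  obtain n where "qmap_multiplicative (act1 d A) (act1 d B) A B n (\<lambda>i k. det3 d * d i k)"
    using assms(1) unfolding liftable_def by blast
  moreover have "act1 d A = act1 d' A" "act1 d B = act1 d' B" "det3 d = det3 d'"
    using eq by (blast intro: act1_cong det3_cong)+
  ultimately have "qmap_multiplicative (act1 d' A) (act1 d' B) A B n (\<lambda>i k. det3 d' * d i k)"
    by simp
  then have "qmap_multiplicative (act1 d' A) (act1 d' B) A B n (\<lambda>i k. det3 d' * d' i k)"
    by (rule qmap_multiplicative_cong) (simp add: eq)
  then show "\<exists>n. qmap_multiplicative (act1 d' A) (act1 d' B) A B n (\<lambda>i k. det3 d' * d' i k)"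
    by blast
qed

lemma mat3_mult_transvection:
  assumes "a \<in> {1..3}" "b \<in> {1..3}" "a \<noteq> b" "i \<in> {1..3}"
  shows "mat3_mult (transvection a b t) d i k = d i k + (if i = a then t * d b k else 0)"
proof -
  have "mat3_mult (transvection a b t) d i k
      = (\<Sum>j\<in>{1..3}. (if j = i then d j k else 0) + (if j = b then (if i = a then t * d j k else 0) else 0))"
    unfolding mat3_mult_def transvection_def using assms(3) by (intro sum.cong refl) auto
  also have "\<dots> = d i k + (if i = a then t * d b k else 0)"
    using assms(2,4) by (simp add: sum.distrib)
  finally show ?thesis .
qed

lemma mat3_mult_dilation:
  assumes "i \<in> {1..3}"
  shows "mat3_mult (dilation a m) d i k = (if i = a then m * d i k else d i k)"
proof -
  have "mat3_mult (dilation a m) d i k = (\<Sum>j\<in>{1..3}. (if j = i then (if i = a then m * d j k else d j k) else 0))"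
    unfolding mat3_mult_def dilation_def by (intro sum.cong refl) auto
  then show ?thesis
    using assms by simp
qed

lemma liftable_if_row_operation:
  assumes "liftable (mat3_mult (transvection a b t) d)" and ab: "a \<in> {1..3}" "b \<in> {1..3}" "a \<noteq> b"
  shows "liftable d"
proof -
  have "liftable (transvection a b (-t))"
    using ab by (rule liftable_transvection)
  then have "liftable (mat3_mult (transvection a b (-t)) (mat3_mult (transvection a b t) d))"
    using assms(1) by (rule liftable_mat3_mult)
  then show ?thesis
  proof (rule liftable_cong)
    fix i k assume i: "i \<in> {1..3::nat}"
    show "mat3_mult (transvection a b (- t)) (mat3_mult (transvection a b t) d) i k = d i k"
      using ab(3) by (simp add: mat3_mult_transvection[OF ab i] mat3_mult_transvection[OF ab ab(2)])
  qed
qed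

lemma liftable_upper_triangular:
  assumes "d 2 1 = 0" "d 3 1 = 0" "d 3 2 = 0"
  shows "liftable d"
proof -
  let ?G = "mat3_mult (dilation 3 (d 3 3)) (mat3_mult (transvection 2 3 (d 2 3))
    (mat3_mult (dilation 2 (d 2 2)) (mat3_mult (transvection 1 2 (d 1 2))
    (mat3_mult (transvection 1 3 (d 1 3)) (dilation 1 (d 1 1))))))"
  have "liftable ?G"
    by (intro liftable_mat3_mult liftable_transvection liftable_dilation) auto
  then show ?thesis
  proof (rule liftable_cong)
    fix i k assume "i \<in> {1..3::nat}" "k \<in> {1..3::nat}"
    then have "i = 1 \<or> i = 2 \<or> i = 3" "k = 1 \<or> k = 2 \<or> k = 3" by auto
    then show "?G i k = d i k"
      using assms by (elim disjE) (simp_all add: mat3_mult_transvection mat3_mult_dilation dilation_def)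
  qed
qed

lemma column_reduction_induct:
  fixes P :: "(nat \<Rightarrow> nat \<Rightarrow> int) \<Rightarrow> bool"
  assumes ab: "a \<in> {1..3}" "b \<in> {1..3}" "a \<noteq> b"
    and step_ab: "\<And>d t. P (mat3_mult (transvection a b t) d) \<Longrightarrow> P d"
    and step_ba: "\<And>d t. P (mat3_mult (transvection b a t) d) \<Longrightarrow> P d"
    and base: "\<And>d. d b c = 0 \<Longrightarrow> P d"
  shows "P d"
proof (induction "nat \<bar>d a c\<bar> + nat \<bar>d b c\<bar>" arbitrary: d rule: less_induct)
  case less
  have add_ab: "mat3_mult (transvection a b t) e a c = e a c + t * e b c"
    "mat3_mult (transvection a b t) e b c = e b c" for t e
    using ab by (simp_all add: mat3_mult_transvection)
  have add_ba: "mat3_mult (transvection b a t) e b c = e b c + t * e a c"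
    "mat3_mult (transvection b a t) e a c = e a c" for t e
    using ab by (simp_all add: mat3_mult_transvection)
  show ?case
  proof (cases "d b c = 0")
    case True
    then show ?thesis by (rule base)
  next
    case b_nonzero: False
    show ?thesis
    proof (cases "d a c = 0")
      case True
      have "mat3_mult (transvection b a (-1)) (mat3_mult (transvection a b 1) d) b c = 0"
        using add_ab add_ba True by simp
      then have "P (mat3_mult (transvection b a (-1)) (mat3_mult (transvection a b 1) d))"
        by (rule base)
      then show ?thesis
        by (rule step_ab[OF step_ba])
    next
      case a_nonzero: False
      show ?thesis
      proof (cases "\<bar>d a c\<bar> \<le> \<bar>d b c\<bar>")
        case True
        let ?d = "mat3_mult (transvection b a (-(d b c div d a c))) d"
        have "?d b c = d b c mod d a c" "?d a c = d a c"
          using add_ba[of "-(d b c div d a c)" d] by (simp_all add: minus_div_mult_eq_mod[symmetric] algebra_simps)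
        moreover have "\<bar>d b c mod d a c\<bar> < \<bar>d a c\<bar>"
          using a_nonzero by (rule abs_mod_less)
        ultimately have "P ?d"
          using True by (intro less.hyps) linarith
        then show ?thesis by (rule step_ba)
      next
        case False
        let ?d = "mat3_mult (transvection a b (-(d a c div d b c))) d"
        have "?d a c = d a c mod d b c" "?d b c = d b c"
          using add_ab[of "-(d a c div d b c)" d] by (simp_all add: minus_div_mult_eq_mod[symmetric] algebra_simps)
        moreover have "\<bar>d a c mod d b c\<bar> < \<bar>d b c\<bar>"
          using b_nonzero by (rule abs_mod_less)
        ultimately have "P ?d"
          using False by (intro less.hyps) linarith
        then show ?thesis by (rule step_ab)
      qed
    qed
  qed
qed

lemma liftable_all: "liftable d"
proof -
  have third_row: "d 2 1 = 0 \<longrightarrow> d 3 1 = 0 \<longrightarrow> liftable d" for d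
  proof (rule column_reduction_induct[where a = 2 and b = 3 and c = 2])
    fix d t
    assume "mat3_mult (transvection 2 3 t) d 2 1 = 0 \<longrightarrow> mat3_mult (transvection 2 3 t) d 3 1 = 0
      \<longrightarrow> liftable (mat3_mult (transvection 2 3 t) d)"
    then show "d 2 1 = 0 \<longrightarrow> d 3 1 = 0 \<longrightarrow> liftable d"
      by (auto simp: mat3_mult_transvection intro: liftable_if_row_operation)
  next
    fix d t
    assume "mat3_mult (transvection 3 2 t) d 2 1 = 0 \<longrightarrow> mat3_mult (transvection 3 2 t) d 3 1 = 0
      \<longrightarrow> liftable (mat3_mult (transvection 3 2 t) d)"
    then show "d 2 1 = 0 \<longrightarrow> d 3 1 = 0 \<longrightarrow> liftable d"
      by (auto simp: mat3_mult_transvection intro: liftable_if_row_operation)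
  qed (auto intro: liftable_upper_triangular)
  have second_row: "d 2 1 = 0 \<longrightarrow> liftable d" for d
  proof (rule column_reduction_induct[where a = 1 and b = 3 and c = 1])
    fix d t
    assume "mat3_mult (transvection 1 3 t) d 2 1 = 0 \<longrightarrow> liftable (mat3_mult (transvection 1 3 t) d)"
    then show "d 2 1 = 0 \<longrightarrow> liftable d"
      by (auto simp: mat3_mult_transvection intro: liftable_if_row_operation)
  next
    fix d t
    assume "mat3_mult (transvection 3 1 t) d 2 1 = 0 \<longrightarrow> liftable (mat3_mult (transvection 3 1 t) d)"
    then show "d 2 1 = 0 \<longrightarrow> liftable d"
      by (auto simp: mat3_mult_transvection intro: liftable_if_row_operation)
  qed (auto intro: third_row[rule_format])
  show ?thesis
  proof (rule column_reduction_induct[where a = 1 and b = 2 and c = 1])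
    fix d t assume "liftable (mat3_mult (transvection 1 2 t) d)"
    then show "liftable d" by (rule liftable_if_row_operation) auto
  next
    fix d t assume "liftable (mat3_mult (transvection 2 1 t) d)"
    then show "liftable d" by (rule liftable_if_row_operation) auto
  qed (auto intro: second_row[rule_format])
qed

text \<open>Each \<open>\<lambda>\<close> is multiplied by \<open>ps - qr\<close>; going through the table is needed because the
  halvings in \<open>c3\<close>, which the table shows to be exact, do not commute with scaling in general.\<close>
lemma c3_linear_combination:
  assumes "i \<in> {1..3}" "j \<in> {1..3}" "k \<in> {1..3}"
  shows "c3 (\<lambda>i j. p * X i j + q * Y i j) (\<lambda>i j. r * X i j + s * Y i j) i j k
    = (p * s - q * r) * c3 X Y i j k"
proof -
  have "i = 1 \<or> i = 2 \<or> i = 3" "j = 1 \<or> j = 2 \<or> j = 3" "k = 1 \<or> k = 2 \<or> k = 3"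
    using assms by auto
  then show ?thesis
    by (elim disjE) (simp_all add: c3_table_Suc algebra_simps)
qed

lemma c0_linear_combination:
  assumes i: "i \<in> {1..3}" and j: "j \<in> {1..3}"
  shows "c0 (\<lambda>i j. p * X i j + q * Y i j) (\<lambda>i j. r * X i j + s * Y i j) i j
    = (p * s - q * r)^2 * c0 X Y i j"
proof -
  let ?D = "p * s - q * r"
  have o: "other i \<in> {1..3}"
    by (simp add: other_def)
  have "c0 (\<lambda>i j. p * X i j + q * Y i j) (\<lambda>i j. r * X i j + s * Y i j) i j
     = (\<Sum>l\<in>{1..3}. (?D * c3 X Y j (other i) l) * (?D * c3 X Y l i (other i))
        - (?D * c3 X Y i j l) * (?D * c3 X Y l (other i) (other i)))"
    unfolding c0_def Let_def
    by (intro sum.cong refl)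
      (simp only: c3_linear_combination[OF j o] c3_linear_combination[OF _ i o]
        c3_linear_combination[OF i j] c3_linear_combination[OF _ o o])
  also have "\<dots> = ?D^2 * c0 X Y i j"
    unfolding c0_def Let_def by (simp add: sum_distrib_left power2_eq_square algebra_simps del: c3_table)
  finally show ?thesis .
qed

lemma qmap_multiplicative_linear_combination:
  "qmap_multiplicative (\<lambda>i j. p * X i j + q * Y i j) (\<lambda>i j. r * X i j + s * Y i j) X Y (\<lambda>_. 0)
     (\<lambda>i k. if i = k then p * s - q * r else 0)"
  by (rule qmap_multiplicative_if_on_basis, rule qmap_multiplicative_on_basisI,
      unfold ball_1_3 ball_0_3, intro conjI)
    (simp_all add: sum_0_3 sum_1_3 sum_Suc0_3 sc_def c3_linear_combination c0_linear_combination
      power2_eq_square del: c3_table)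

lemma qmap_multiplicative_act:
  "\<exists>n. qmap_multiplicative (fst (act d1 p q r s A B)) (snd (act d1 p q r s A B)) A B n
     (\<lambda>i k. det3 d1 * (p * s - q * r) * d1 i k)"
proof -
  obtain n where d1: "qmap_multiplicative (act1 d1 A) (act1 d1 B) A B n (\<lambda>i k. det3 d1 * d1 i k)"
    using liftable_all unfolding liftable_def by blast
  have d2: "qmap_multiplicative (fst (act d1 p q r s A B)) (snd (act d1 p q r s A B)) (act1 d1 A) (act1 d1 B)
      (\<lambda>_. 0) (\<lambda>i k. if i = k then p * s - q * r else 0)"
    unfolding act_def fst_conv snd_conv by (rule qmap_multiplicative_linear_combination)
  show ?thesis
    by (rule exI, rule qmap_multiplicative_cong[OF qmap_multiplicative_comp[OF d1 d2]])
      (simp add: mat3_mult_scalar_left mult_ac)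
qed

theorem proposition5p3:
  fixes A B :: tqf and d1 :: "nat \<Rightarrow> nat \<Rightarrow> int" and p q r s :: int
  assumes "nondegenerate A B"
    and "det3 d1 \<noteq> 0" and "p * s - q * r \<noteq> 0"
  shows "\<exists>\<psi>. \<psi> \<in> ring_hom (QR (fst (act d1 p q r s A B)) (snd (act d1 p q r s A B))) (QR A B)
           \<and> inj_on \<psi> (carrier (QR (fst (act d1 p q r s A B)) (snd (act d1 p q r s A B))))
           \<and> (\<forall>i\<in>{1..3}. \<exists>n::int. \<psi> (unitv i) =
                 (\<lambda>k. if k = 0 then n
                      else if k \<le> 3 then det3 d1 * (p * s - q * r) * d1 i k else 0))"
proof -
  define M where "M = (\<lambda>i k. det3 d1 * (p * s - q * r) * d1 i k)"
  obtain n where mult: "qmap_multiplicative (fst (act d1 p q r s A B)) (snd (act d1 p q r s A B)) A B n M"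
    unfolding M_def using qmap_multiplicative_act by blast
  have "det3 M = (det3 d1 * (p * s - q * r)) ^ 3 * det3 d1"
    unfolding M_def by (rule det3_scale)
  then have det: "det3 M \<noteq> 0"
    using assms(2,3) by simp
  have images: "\<forall>i\<in>{1..3}. \<exists>m. qmap n M (unitv i) =
      (\<lambda>k. if k = 0 then m else if k \<le> 3 then det3 d1 * (p * s - q * r) * d1 i k else 0)"
  proof (intro ballI exI)
    fix i :: nat assume "i \<in> {1..3}"
    then show "qmap n M (unitv i) =
      (\<lambda>k. if k = 0 then n i else if k \<le> 3 then det3 d1 * (p * s - q * r) * d1 i k else 0)"
      by (simp add: qmap_unitv M_def)
  qed
  show ?thesis
    using qmap_ring_hom[OF mult] qmap_inj_on[OF det] images by blast
qed

end
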